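(* Fix $\rho\in(0,1)$. For each $n\ge 2$ let $X=(X_1,\dots,X_n)'$ be jointly normal with $E[X_i]=0$, $E[X_i^2]=1$ and $\operatorname{Corr}(X_i,X_j)=\rho$ for all $i\neq j$. Let $s_n^2$ be the sample variance of $X$ and $\widehat\rho=(1-s_n^2)\,I(s_n^2<1)$. Then for every sequence of positive reals $(a_n)$ with $a_n=o(n)$, $$\sqrt{a_n}\left(\sqrt{1-\rho}-\sqrt{1-\widehat\rho}\right)\xrightarrow[n\to\infty]{P}0.$$ In particular (taking $a_n=2\ln n$), $\widehat\rho$ satisfies $\sqrt{2\ln n}\,\big(\sqrt{1-\rho}-\sqrt{1-\widehat\rho}\big)\xrightarrow{P}0$.
   Context: The sample variance is $s_n^2=\frac{1}{n-1}X'\left(I_n-\frac1n J_n\right)X$, where $I_n$ is the $n\times n$ identity matrix and $J_n$ the $n\times n$ matrix of ones. $I(\cdot)$ denotes the indicator function. The correlation $\rho$ does not depend on $n$. *)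

theory Defs
  imports "HOL-Probability.Probability" "HOL-Library.Landau_Symbols"
begin

definition normal_rv :: "'a measure \<Rightarrow> ('a \<Rightarrow> real) \<Rightarrow> real \<Rightarrow> real \<Rightarrow> bool" where
  "normal_rv M Y mu s2 \<longleftrightarrow> Y \<in> borel_measurable M \<and> s2 \<ge> 0 \<and>
     (if s2 = 0 then (AE x in M. Y x = mu)
      else distributed M lborel Y (normal_density mu (sqrt s2)))"

(* X_0,...,X_{n-1} jointly normal: every linear combination is (possibly degenerate) normal *)
definition jointly_normal :: "'a measure \<Rightarrow> nat \<Rightarrow> (nat \<Rightarrow> 'a \<Rightarrow> real) \<Rightarrow> bool" where
  "jointly_normal M n X \<longleftrightarrow> (\<forall>i<n. X i \<in> borel_measurable M) \<and>
     (\<forall>c :: nat \<Rightarrow> real. \<exists>mu s2. normal_rv M (\<lambda>\<omega>. \<Sum>i<n. c i * X i \<omega>) mu s2)"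

definition covariance :: "'a measure \<Rightarrow> ('a \<Rightarrow> real) \<Rightarrow> ('a \<Rightarrow> real) \<Rightarrow> real" where
  "covariance M Y Z = (\<integral>\<omega>. (Y \<omega> - (\<integral>x. Y x \<partial>M)) * (Z \<omega> - (\<integral>x. Z x \<partial>M)) \<partial>M)"

definition correlation :: "'a measure \<Rightarrow> ('a \<Rightarrow> real) \<Rightarrow> ('a \<Rightarrow> real) \<Rightarrow> real" where
  "correlation M Y Z = covariance M Y Z / sqrt (covariance M Y Y * covariance M Z Z)"

(* sample variance s_n^2 = 1/(n-1) X'(I_n - (1/n) J_n) X, with X indexed by 0..n-1 *)
definition sample_var :: "nat \<Rightarrow> (nat \<Rightarrow> real) \<Rightarrow> real" where
  "sample_var n x = 1 / (real n - 1) *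
     (\<Sum>i<n. \<Sum>j<n. x i * ((if i = j then 1 else 0) - 1 / real n) * x j)"

definition rho_hat :: "nat \<Rightarrow> (nat \<Rightarrow> real) \<Rightarrow> real" where
  "rho_hat n x = (1 - sample_var n x) * of_bool (sample_var n x < 1)"

end

theory Submission
  imports Defs "HOL-Real_Asymp.Real_Asymp"
begin

text \<open>
  \<open>(n - 1) s\<^sub>n\<^sup>2\<close> is the sum of squares of the deviations
  \<open>D\<^sub>i = X\<^sub>i - (\<Sum>\<^sub>k X\<^sub>k)/n = \<Sum>\<^sub>k (\<delta>\<^sub>i\<^sub>k - 1/n) X\<^sub>k\<close>, centred jointly Gaussian variables
  with \<open>E[D\<^sub>i D\<^sub>j] = (1 - \<rho>)(\<delta>\<^sub>i\<^sub>j - 1/n)\<close>. Hence \<open>E s\<^sub>n\<^sup>2 = 1 - \<rho>\<close>, and Isserlis' identity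
  \<open>E[U\<^sup>2 V\<^sup>2] = E[U\<^sup>2] E[V\<^sup>2] + 2 E[U V]\<^sup>2\<close> for centred jointly Gaussian \<open>U, V\<close> gives
  \<open>Var s\<^sub>n\<^sup>2 = 2 (1 - \<rho>)\<^sup>2 / (n - 1)\<close>. Whenever \<open>|s\<^sub>n\<^sup>2 - (1 - \<rho>)| < \<rho>/2\<close> the indicator
  is 1, so \<open>1 - rho_hat = s\<^sub>n\<^sup>2\<close> and \<open>|sqrt (1 - \<rho>) - s\<^sub>n| \<le> |s\<^sub>n\<^sup>2 - (1 - \<rho>)| / sqrt (1 - \<rho>)\<close>.
  Chebyshev's inequality with a threshold of order \<open>\<epsilon> / sqrt a\<^sub>n\<close> therefore bounds the
  probability of a deviation above \<open>\<epsilon>\<close> by \<open>O((a\<^sub>n + 1)/n)\<close>, which tends to 0 as \<open>a\<^sub>n = o(n)\<close>.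
\<close>

lemma normal_rv_centered_moments:
  assumes "prob_space M" and "normal_rv M Y \<mu> s2"
  shows "integrable M (\<lambda>x. (Y x - \<mu>) ^ k)"
    and "(\<integral>x. Y x - \<mu> \<partial>M) = 0"
    and "(\<integral>x. (Y x - \<mu>)\<^sup>2 \<partial>M) = s2"
    and "(\<integral>x. (Y x - \<mu>) ^ 4 \<partial>M) = 3 * s2\<^sup>2"
proof -
  interpret prob_space M by fact
  have [measurable]: "Y \<in> borel_measurable M" and "s2 \<ge> 0"
    using assms(2) by (auto simp: normal_rv_def)
  have "integrable M (\<lambda>x. (Y x - \<mu>) ^ k) \<and> (\<integral>x. Y x - \<mu> \<partial>M) = 0 \<and>
        (\<integral>x. (Y x - \<mu>)\<^sup>2 \<partial>M) = s2 \<and> (\<integral>x. (Y x - \<mu>) ^ 4 \<partial>M) = 3 * s2\<^sup>2"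
  proof (cases "s2 = 0")
    case True
    then have "AE x in M. Y x = \<mu>" using assms(2) by (simp add: normal_rv_def)
    then have zero: "AE x in M. (Y x - \<mu>) ^ j = 0" if "j > 0" for j :: nat
      by eventually_elim (use that in simp)
    have "integrable M (\<lambda>x. (Y x - \<mu>) ^ j)" for j
      by (cases "j = 0")
        (use zero[of j] in \<open>auto intro: integrable_cong_AE_imp[of _ "\<lambda>_. 0"] elim: AE_mp\<close>)
    moreover have vanish: "(\<integral>x. (Y x - \<mu>) ^ j \<partial>M) = 0" if "j > 0" for j
      using integral_cong_AE[of "\<lambda>x. (Y x - \<mu>) ^ j" M "\<lambda>_. 0"] zero[OF that] by simp
    ultimately show ?thesis using True vanish[of 1] vanish[of 2] vanish[of 4] by simp
  next
    case False
    define \<sigma> where "\<sigma> = sqrt s2"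
    have "\<sigma> > 0" and s2_eq: "s2 = \<sigma>\<^sup>2"
      using False \<open>s2 \<ge> 0\<close> by (simp_all add: \<sigma>_def)
    have D: "distributed M lborel Y (normal_density \<mu> \<sigma>)"
      using assms(2) False by (simp add: normal_rv_def \<sigma>_def)
    have moment: "(\<integral>x. (Y x - \<mu>) ^ j \<partial>M) = (\<integral>x. normal_density \<mu> \<sigma> x * (x - \<mu>) ^ j \<partial>lborel)" for j
      using distributed_integral[OF D, of "\<lambda>x. (x - \<mu>) ^ j"] by simp
    have "integrable M (\<lambda>x. (Y x - \<mu>) ^ k)"
      using distributed_integrable[OF D, of "\<lambda>x. (x - \<mu>) ^ k"]
        integrable_normal_moment[OF \<open>\<sigma> > 0\<close>, of \<mu> k] by simp
    moreover have "(\<integral>x. Y x - \<mu> \<partial>M) = 0"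
      using moment[of "2 * 0 + 1"] integral_normal_moment_odd[OF \<open>\<sigma> > 0\<close>, of \<mu> 0] by simp
    moreover have "(\<integral>x. (Y x - \<mu>)\<^sup>2 \<partial>M) = s2"
      using moment[of "2 * 1"] integral_normal_moment_even[OF \<open>\<sigma> > 0\<close>, of \<mu> 1] \<open>\<sigma> > 0\<close>
      by (simp add: s2_eq)
    moreover have "(\<integral>x. (Y x - \<mu>) ^ 4 \<partial>M) = 3 * s2\<^sup>2"
      using moment[of "2 * 2"] integral_normal_moment_even[OF \<open>\<sigma> > 0\<close>, of \<mu> 2] \<open>\<sigma> > 0\<close>
      by (simp add: s2_eq fact_numeral power_mult_distrib field_simps eval_nat_numeral)
    ultimately show ?thesis by simp
  qed
  then show "integrable M (\<lambda>x. (Y x - \<mu>) ^ k)" "(\<integral>x. Y x - \<mu> \<partial>M) = 0"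
    "(\<integral>x. (Y x - \<mu>)\<^sup>2 \<partial>M) = s2" "(\<integral>x. (Y x - \<mu>) ^ 4 \<partial>M) = 3 * s2\<^sup>2"
    by auto
qed

text \<open>By polarization, \<open>U\<^sup>2V\<^sup>2\<close> and \<open>UV\<close> are linear combinations of powers of \<open>U\<close>, \<open>V\<close>,
  \<open>U + V\<close> and \<open>U - V\<close>; Gaussian fourth moments \<open>E Z\<^sup>4 = 3 (E Z\<^sup>2)\<^sup>2\<close> then yield Isserlis' identity.\<close>

lemma isserlis_from_fourth_moments:
  fixes U V :: "'a \<Rightarrow> real"
  assumes "integrable M (\<lambda>x. (U x)\<^sup>2)" "integrable M (\<lambda>x. (V x)\<^sup>2)"
    and "integrable M (\<lambda>x. (U x) ^ 4)" "integrable M (\<lambda>x. (V x) ^ 4)"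
    and "integrable M (\<lambda>x. (U x + V x)\<^sup>2)" "integrable M (\<lambda>x. (U x - V x)\<^sup>2)"
    and "integrable M (\<lambda>x. (U x + V x) ^ 4)" "integrable M (\<lambda>x. (U x - V x) ^ 4)"
    and U4: "(\<integral>x. (U x) ^ 4 \<partial>M) = 3 * (\<integral>x. (U x)\<^sup>2 \<partial>M)\<^sup>2"
    and V4: "(\<integral>x. (V x) ^ 4 \<partial>M) = 3 * (\<integral>x. (V x)\<^sup>2 \<partial>M)\<^sup>2"
    and plus4: "(\<integral>x. (U x + V x) ^ 4 \<partial>M) = 3 * (\<integral>x. (U x + V x)\<^sup>2 \<partial>M)\<^sup>2"
    and minus4: "(\<integral>x. (U x - V x) ^ 4 \<partial>M) = 3 * (\<integral>x. (U x - V x)\<^sup>2 \<partial>M)\<^sup>2"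
  shows "integrable M (\<lambda>x. U x * V x)"
    and "integrable M (\<lambda>x. (U x)\<^sup>2 * (V x)\<^sup>2)"
    and "(\<integral>x. (U x)\<^sup>2 * (V x)\<^sup>2 \<partial>M) =
          (\<integral>x. (U x)\<^sup>2 \<partial>M) * (\<integral>x. (V x)\<^sup>2 \<partial>M) + 2 * (\<integral>x. U x * V x \<partial>M)\<^sup>2"
proof -
  have prod_eq: "U x * V x = ((U x + V x)\<^sup>2 - (U x - V x)\<^sup>2) / 4" for x
    by (simp add: power2_eq_square field_simps)
  have sq_prod_eq: "(U x)\<^sup>2 * (V x)\<^sup>2 =
      ((U x + V x) ^ 4 + (U x - V x) ^ 4 - 2 * (U x) ^ 4 - 2 * (V x) ^ 4) / 12" for x
    by (simp add: field_simps) algebra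
  show int_prod: "integrable M (\<lambda>x. U x * V x)"
    unfolding prod_eq using assms by auto
  show "integrable M (\<lambda>x. (U x)\<^sup>2 * (V x)\<^sup>2)"
    unfolding sq_prod_eq using assms by auto
  define a b c where "a = (\<integral>x. (U x)\<^sup>2 \<partial>M)" and "b = (\<integral>x. (V x)\<^sup>2 \<partial>M)"
    and "c = (\<integral>x. U x * V x \<partial>M)"
  have "(U x + V x)\<^sup>2 = (U x)\<^sup>2 + (V x)\<^sup>2 + 2 * (U x * V x)"
    and "(U x - V x)\<^sup>2 = (U x)\<^sup>2 + (V x)\<^sup>2 - 2 * (U x * V x)" for x
    by (simp_all add: power2_eq_square algebra_simps)
  then have plus2: "(\<integral>x. (U x + V x)\<^sup>2 \<partial>M) = a + b + 2 * c"
    and minus2: "(\<integral>x. (U x - V x)\<^sup>2 \<partial>M) = a + b - 2 * c"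
    unfolding a_def b_def c_def using assms int_prod by simp_all
  have "(\<integral>x. (U x)\<^sup>2 * (V x)\<^sup>2 \<partial>M) = ((\<integral>x. (U x + V x) ^ 4 \<partial>M) + (\<integral>x. (U x - V x) ^ 4 \<partial>M)
      - 2 * (\<integral>x. (U x) ^ 4 \<partial>M) - 2 * (\<integral>x. (V x) ^ 4 \<partial>M)) / 12"
    unfolding sq_prod_eq using assms by simp
  also have "\<dots> = a * b + 2 * c\<^sup>2"
    unfolding U4 V4 plus4 minus4 plus2 minus2 a_def[symmetric] b_def[symmetric]
    by (simp add: power2_eq_square algebra_simps)
  finally show "(\<integral>x. (U x)\<^sup>2 * (V x)\<^sup>2 \<partial>M) =
      (\<integral>x. (U x)\<^sup>2 \<partial>M) * (\<integral>x. (V x)\<^sup>2 \<partial>M) + 2 * (\<integral>x. U x * V x \<partial>M)\<^sup>2"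
    by (simp add: a_def b_def c_def)
qed

definition lin_comb :: "nat \<Rightarrow> (nat \<Rightarrow> 'a \<Rightarrow> real) \<Rightarrow> (nat \<Rightarrow> real) \<Rightarrow> 'a \<Rightarrow> real" where
  "lin_comb n X c \<omega> = (\<Sum>i<n. c i * X i \<omega>)"

lemma lin_comb_add: "lin_comb n X a \<omega> + lin_comb n X b \<omega> = lin_comb n X (\<lambda>i. a i + b i) \<omega>"
  unfolding lin_comb_def by (simp add: sum.distrib distrib_right)

lemma lin_comb_diff: "lin_comb n X a \<omega> - lin_comb n X b \<omega> = lin_comb n X (\<lambda>i. a i - b i) \<omega>"
  unfolding lin_comb_def by (simp add: sum_subtractf left_diff_distrib)

lemma lin_comb_unit: "k < n \<Longrightarrow> lin_comb n X (\<lambda>i. if i = k then 1 else 0) = X k"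
  by (rule ext) (simp add: lin_comb_def if_distrib[of "\<lambda>x. x * _"] cong: if_cong)

locale centered_jointly_normal = prob_space M for M :: "'a measure" +
  fixes n :: nat and X :: "nat \<Rightarrow> 'a \<Rightarrow> real"
  assumes jointly_normal: "jointly_normal M n X"
    and mean_zero: "\<And>i. i < n \<Longrightarrow> (\<integral>\<omega>. X i \<omega> \<partial>M) = 0"
begin

lemma X_measurable [measurable]: "i < n \<Longrightarrow> X i \<in> borel_measurable M"
  using jointly_normal by (auto simp: jointly_normal_def)

lemma lin_comb_measurable [measurable]: "lin_comb n X c \<in> borel_measurable M"
  unfolding lin_comb_def[abs_def] by measurable

lemma lin_comb_normal_rv: "\<exists>\<mu> s2. normal_rv M (lin_comb n X c) \<mu> s2"
  using jointly_normal unfolding jointly_normal_def lin_comb_def[abs_def] by blast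

lemma integrable_lin_comb: "integrable M (lin_comb n X c)"
proof -
  obtain \<mu> s2 where "normal_rv M (lin_comb n X c) \<mu> s2"
    using lin_comb_normal_rv by blast
  from normal_rv_centered_moments(1)[OF prob_space_axioms this, of 1]
  have "integrable M (\<lambda>x. (lin_comb n X c x - \<mu>) + \<mu>)"
    by (intro Bochner_Integration.integrable_add) auto
  then show ?thesis by simp
qed

lemma integrable_X: "i < n \<Longrightarrow> integrable M (X i)"
  using integrable_lin_comb[of "\<lambda>j. if j = i then 1 else 0"] by (simp add: lin_comb_unit)

lemma lin_comb_centered_normal_rv: "\<exists>s2. normal_rv M (lin_comb n X c) 0 s2"
proof -
  obtain \<mu> s2 where N: "normal_rv M (lin_comb n X c) \<mu> s2"
    using lin_comb_normal_rv by blast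
  have "(\<integral>\<omega>. lin_comb n X c \<omega> \<partial>M) = 0"
    unfolding lin_comb_def using integrable_X mean_zero by simp
  with normal_rv_centered_moments(2)[OF prob_space_axioms N] integrable_lin_comb[of c]
  have "\<mu> = 0" by (simp add: prob_space)
  with N show ?thesis by blast
qed

lemma integrable_lin_comb_power: "integrable M (\<lambda>\<omega>. (lin_comb n X c \<omega>) ^ k)"
  using lin_comb_centered_normal_rv[of c] normal_rv_centered_moments(1)[OF prob_space_axioms]
  by fastforce

lemma lin_comb_fourth_moment:
  "(\<integral>\<omega>. (lin_comb n X c \<omega>) ^ 4 \<partial>M) = 3 * (\<integral>\<omega>. (lin_comb n X c \<omega>)\<^sup>2 \<partial>M)\<^sup>2"
  using lin_comb_centered_normal_rv[of c] normal_rv_centered_moments(3,4)[OF prob_space_axioms]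
  by fastforce

lemma lin_comb_isserlis:
  shows "integrable M (\<lambda>x. lin_comb n X a x * lin_comb n X b x)"
    and "integrable M (\<lambda>x. (lin_comb n X a x)\<^sup>2 * (lin_comb n X b x)\<^sup>2)"
    and "(\<integral>x. (lin_comb n X a x)\<^sup>2 * (lin_comb n X b x)\<^sup>2 \<partial>M) =
          (\<integral>x. (lin_comb n X a x)\<^sup>2 \<partial>M) * (\<integral>x. (lin_comb n X b x)\<^sup>2 \<partial>M)
          + 2 * (\<integral>x. lin_comb n X a x * lin_comb n X b x \<partial>M)\<^sup>2"
  by (rule isserlis_from_fourth_moments,
      unfold lin_comb_add lin_comb_diff,
      (rule integrable_lin_comb_power lin_comb_fourth_moment)+)+

lemma integrable_X_mult_X: "k < n \<Longrightarrow> l < n \<Longrightarrow> integrable M (\<lambda>x. X k x * X l x)"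
  using lin_comb_isserlis(1)[of "\<lambda>j. if j = k then 1 else 0" "\<lambda>j. if j = l then 1 else 0"]
  by (simp add: lin_comb_unit)

lemma integral_lin_comb_mult:
  "(\<integral>x. lin_comb n X a x * lin_comb n X b x \<partial>M) =
     (\<Sum>k<n. \<Sum>l<n. a k * b l * (\<integral>x. X k x * X l x \<partial>M))"
proof -
  have "lin_comb n X a x * lin_comb n X b x = (\<Sum>k<n. \<Sum>l<n. a k * b l * (X k x * X l x))" for x
    unfolding lin_comb_def sum_product by (intro sum.cong refl) (simp add: mult_ac)
  then have "(\<integral>x. lin_comb n X a x * lin_comb n X b x \<partial>M) =
      (\<integral>x. (\<Sum>k<n. \<Sum>l<n. a k * b l * (X k x * X l x)) \<partial>M)"
    by simp
  also have "\<dots> = (\<Sum>k<n. (\<integral>x. (\<Sum>l<n. a k * b l * (X k x * X l x)) \<partial>M))"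
    by (rule Bochner_Integration.integral_sum)
      (auto intro!: integrable_sum integrable_mult_right integrable_X_mult_X)
  also have "\<dots> = (\<Sum>k<n. \<Sum>l<n. a k * b l * (\<integral>x. X k x * X l x \<partial>M))"
    by (intro sum.cong refl, subst Bochner_Integration.integral_sum)
      (auto intro!: integrable_mult_right integrable_X_mult_X)
  finally show ?thesis .
qed

end

definition centering :: "nat \<Rightarrow> nat \<Rightarrow> nat \<Rightarrow> real" where
  "centering n i k = (if i = k then 1 else 0) - 1 / real n"

lemma sum_centering: "i < n \<Longrightarrow> (\<Sum>k<n. centering n i k) = 0"
  by (simp add: centering_def sum_subtractf)

lemma sum_centering_mult: "i < n \<Longrightarrow> (\<Sum>k<n. centering n i k * x k) = x i - (\<Sum>k<n. x k) / real n"
  by (simp add: centering_def left_diff_distrib sum_subtractf sum_divide_distrib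
      if_distrib[of "\<lambda>x. x * _"] cong: if_cong)

lemma centering_idem:
  assumes "i < n" "j < n"
  shows "(\<Sum>k<n. centering n i k * centering n j k) = centering n i j"
  using sum_centering_mult[of j n "centering n i"] assms
  by (simp add: sum_centering mult.commute)

lemma sample_var_eq_sum_sq:
  assumes "n > 0"
  shows "sample_var n x = (\<Sum>i<n. (\<Sum>k<n. centering n i k * x k)\<^sup>2) / (real n - 1)"
proof -
  define m where "m = (\<Sum>k<n. x k) / real n"
  have "(\<Sum>i<n. \<Sum>j<n. x i * ((if i = j then 1 else 0) - 1 / real n) * x j) = (\<Sum>i<n. x i * (x i - m))"
  proof (intro sum.cong refl)
    fix i assume "i \<in> {..<n}"
    then have "i < n" by simp
    have "(\<Sum>j<n. x i * ((if i = j then 1 else 0) - 1 / real n) * x j) =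
        x i * (\<Sum>j<n. centering n i j * x j)"
      by (simp add: centering_def sum_distrib_left mult.assoc)
    then show "(\<Sum>j<n. x i * ((if i = j then 1 else 0) - 1 / real n) * x j) = x i * (x i - m)"
      using sum_centering_mult[OF \<open>i < n\<close>, of x] by (simp add: m_def)
  qed
  also have "\<dots> = (\<Sum>i<n. (x i - m)\<^sup>2) + m * (\<Sum>i<n. x i - m)"
    unfolding sum_distrib_left sum.distrib[symmetric]
    by (intro sum.cong refl) (simp add: power2_eq_square algebra_simps)
  also have "(\<Sum>i<n. x i - m) = 0"
    using assms by (simp add: sum_subtractf m_def)
  finally show ?thesis
    by (simp add: sample_var_def sum_centering_mult m_def)
qed

lemma sample_var_nonneg: "n \<ge> 2 \<Longrightarrow> sample_var n x \<ge> 0"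
  by (simp add: sample_var_eq_sum_sq sum_nonneg)

lemma sum_equicorrelated_form:
  fixes a b :: "nat \<Rightarrow> real"
  shows "(\<Sum>k<n. \<Sum>l<n. a k * b l * (if k = l then 1 else \<rho>)) =
     \<rho> * (\<Sum>k<n. a k) * (\<Sum>l<n. b l) + (1 - \<rho>) * (\<Sum>k<n. a k * b k)"
proof -
  have "(\<Sum>k<n. \<Sum>l<n. a k * b l * (if k = l then 1 else \<rho>)) =
        (\<Sum>k<n. \<Sum>l<n. \<rho> * (a k * b l) + (1 - \<rho>) * ((if k = l then 1 else 0) * (a k * b l)))"
    by (intro sum.cong refl) (auto simp: algebra_simps)
  also have "\<dots> = (\<Sum>k<n. \<rho> * (\<Sum>l<n. a k * b l) + (1 - \<rho>) * (a k * b k))"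
    by (simp add: sum.distrib sum_distrib_left[symmetric] if_distrib[of "\<lambda>x. x * _"] cong: if_cong)
  also have "\<dots> = \<rho> * (\<Sum>k<n. a k) * (\<Sum>l<n. b l) + (1 - \<rho>) * (\<Sum>k<n. a k * b k)"
    by (simp add: sum.distrib sum_distrib_left[symmetric] sum_product mult.assoc)
  finally show ?thesis .
qed

locale equicorrelated_normal = centered_jointly_normal +
  fixes \<rho> :: real
  assumes second_moments:
      "\<And>k l. k < n \<Longrightarrow> l < n \<Longrightarrow> (\<integral>x. X k x * X l x \<partial>M) = (if k = l then 1 else \<rho>)"
    and two_le_n: "n \<ge> 2"
begin

abbreviation deviation :: "nat \<Rightarrow> 'a \<Rightarrow> real" where
  "deviation i \<equiv> lin_comb n X (centering n i)"

lemma integral_deviation_mult: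
  assumes "i < n" "j < n"
  shows "(\<integral>x. deviation i x * deviation j x \<partial>M) = (1 - \<rho>) * centering n i j"
proof -
  have "(\<integral>x. deviation i x * deviation j x \<partial>M) =
      (\<Sum>k<n. \<Sum>l<n. centering n i k * centering n j l * (if k = l then 1 else \<rho>))"
    unfolding integral_lin_comb_mult by (intro sum.cong refl) (simp add: second_moments)
  then show ?thesis
    using assms by (simp add: sum_equicorrelated_form sum_centering centering_idem)
qed

definition sum_sq_dev :: "'a \<Rightarrow> real" where
  "sum_sq_dev \<omega> = (\<Sum>i<n. (deviation i \<omega>)\<^sup>2)"

lemma sample_var_eq_sum_sq_dev: "sample_var n (\<lambda>i. X i \<omega>) = sum_sq_dev \<omega> / (real n - 1)"
  using sample_var_eq_sum_sq[of n "\<lambda>i. X i \<omega>"] two_le_n by (simp add: sum_sq_dev_def lin_comb_def)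

lemma sum_sq_dev_sq: "(sum_sq_dev \<omega>)\<^sup>2 = (\<Sum>i<n. \<Sum>j<n. (deviation i \<omega>)\<^sup>2 * (deviation j \<omega>)\<^sup>2)"
  unfolding sum_sq_dev_def power2_eq_square[of "sum _ _"] sum_product by simp

lemma sample_var_measurable [measurable]: "(\<lambda>\<omega>. sample_var n (\<lambda>i. X i \<omega>)) \<in> borel_measurable M"
  unfolding sample_var_eq_sum_sq_dev sum_sq_dev_def by measurable

lemma integrable_sum_sq_dev: "integrable M sum_sq_dev"
  unfolding sum_sq_dev_def[abs_def] using integrable_lin_comb_power by auto

lemma integrable_sum_sq_dev_sq: "integrable M (\<lambda>\<omega>. (sum_sq_dev \<omega>)\<^sup>2)"
  unfolding sum_sq_dev_sq using lin_comb_isserlis(2) by auto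

lemma integral_sum_sq_dev: "(\<integral>\<omega>. sum_sq_dev \<omega> \<partial>M) = (1 - \<rho>) * (real n - 1)"
proof -
  have "(\<integral>\<omega>. sum_sq_dev \<omega> \<partial>M) = (\<Sum>i<n. (\<integral>x. (deviation i x)\<^sup>2 \<partial>M))"
    unfolding sum_sq_dev_def[abs_def] using integrable_lin_comb_power
    by (simp add: Bochner_Integration.integral_sum)
  also have "\<dots> = (\<Sum>i<n. (1 - \<rho>) * (1 - 1 / real n))"
    using integral_deviation_mult by (intro sum.cong refl) (simp add: power2_eq_square centering_def)
  also have "\<dots> = (1 - \<rho>) * (real n - 1)"
    using two_le_n by (simp add: field_simps)
  finally show ?thesis .
qed

lemma integral_sum_sq_dev_sq:
  "(\<integral>\<omega>. (sum_sq_dev \<omega>)\<^sup>2 \<partial>M) = ((1 - \<rho>) * (real n - 1))\<^sup>2 + 2 * (1 - \<rho>)\<^sup>2 * (real n - 1)"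
proof -
  have "(\<integral>\<omega>. (sum_sq_dev \<omega>)\<^sup>2 \<partial>M) = (\<Sum>i<n. \<Sum>j<n. (\<integral>x. (deviation i x)\<^sup>2 * (deviation j x)\<^sup>2 \<partial>M))"
    unfolding sum_sq_dev_sq using lin_comb_isserlis(2) by (simp add: Bochner_Integration.integral_sum)
  also have "\<dots> = (\<Sum>i<n. \<Sum>j<n. ((1 - \<rho>) * (1 - 1 / real n))\<^sup>2 + 2 * (1 - \<rho>)\<^sup>2 * (centering n i j)\<^sup>2)"
    unfolding lin_comb_isserlis(3)
    by (intro sum.cong refl)
      (simp add: integral_deviation_mult power2_eq_square power_mult_distrib centering_def)
  also have "\<dots> = (\<Sum>i<n. real n * ((1 - \<rho>) * (1 - 1 / real n))\<^sup>2 + 2 * (1 - \<rho>)\<^sup>2 * (1 - 1 / real n))"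
    by (intro sum.cong refl)
      (simp add: sum.distrib sum_distrib_left[symmetric] power2_eq_square centering_idem,
       simp add: centering_def)
  also have "\<dots> = ((1 - \<rho>) * (real n - 1))\<^sup>2 + 2 * (1 - \<rho>)\<^sup>2 * (real n - 1)"
    using two_le_n by (simp add: field_simps power2_eq_square)
  finally show ?thesis .
qed

lemma expectation_sample_var: "(\<integral>\<omega>. sample_var n (\<lambda>i. X i \<omega>) \<partial>M) = 1 - \<rho>"
  using two_le_n by (simp add: sample_var_eq_sum_sq_dev integral_sum_sq_dev)

lemma integrable_sample_var_sq: "integrable M (\<lambda>\<omega>. (sample_var n (\<lambda>i. X i \<omega>))\<^sup>2)"
  by (simp add: sample_var_eq_sum_sq_dev power_divide integrable_sum_sq_dev_sq)

lemma variance_sample_var: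
  "variance (\<lambda>\<omega>. sample_var n (\<lambda>i. X i \<omega>)) = 2 * (1 - \<rho>)\<^sup>2 / (real n - 1)"
proof -
  have int: "integrable M (\<lambda>\<omega>. sample_var n (\<lambda>i. X i \<omega>))"
    by (simp add: sample_var_eq_sum_sq_dev integrable_sum_sq_dev)
  have "variance (\<lambda>\<omega>. sample_var n (\<lambda>i. X i \<omega>)) =
      (\<integral>\<omega>. (sample_var n (\<lambda>i. X i \<omega>))\<^sup>2 \<partial>M) - (1 - \<rho>)\<^sup>2"
    using variance_eq[OF int integrable_sample_var_sq] by (simp only: expectation_sample_var)
  also have "\<dots> = (\<integral>\<omega>. (sum_sq_dev \<omega>)\<^sup>2 \<partial>M) / (real n - 1)\<^sup>2 - (1 - \<rho>)\<^sup>2"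
    by (simp add: sample_var_eq_sum_sq_dev power_divide)
  also have "\<dots> = 2 * (1 - \<rho>)\<^sup>2 / (real n - 1)"
  proof -
    have "((c * m)\<^sup>2 + 2 * c\<^sup>2 * m) / m\<^sup>2 - c\<^sup>2 = 2 * c\<^sup>2 / m" if "m > 0" for c m :: real
      using that by (simp add: field_simps power2_eq_square)
    then show ?thesis
      unfolding integral_sum_sq_dev_sq using two_le_n by simp
  qed
  finally show ?thesis .
qed

end

lemma abs_sqrt_diff_le:
  fixes x y :: real
  assumes "x > 0" "y \<ge> 0"
  shows "\<bar>sqrt x - sqrt y\<bar> \<le> \<bar>x - y\<bar> / sqrt x"
proof -
  have "\<bar>sqrt x - sqrt y\<bar> * sqrt x \<le> \<bar>sqrt x - sqrt y\<bar> * (sqrt x + sqrt y)"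
    using assms by (intro mult_left_mono) auto
  also have "\<dots> = \<bar>(sqrt x - sqrt y) * (sqrt x + sqrt y)\<bar>"
    using assms by (simp add: abs_mult)
  also have "\<dots> = \<bar>x - y\<bar>"
    using assms by (simp add: algebra_simps)
  finally show ?thesis
    using assms by (simp add: pos_le_divide_eq)
qed

lemma inverse_min_sq_le:
  fixes p q :: real
  assumes "p > 0" "q > 0"
  shows "1 / (min p q)\<^sup>2 \<le> 1 / p\<^sup>2 + 1 / q\<^sup>2"
  using assms by (cases "p \<le> q") (auto simp: min_def)

lemma abs_sqrt_one_minus_rho_hat_le:
  assumes "n \<ge> 2" "0 < \<rho>" "\<rho> < 1" "\<bar>sample_var n x - (1 - \<rho>)\<bar> < \<rho> / 2"
  shows "\<bar>sqrt (1 - \<rho>) - sqrt (1 - rho_hat n x)\<bar> \<le> \<bar>sample_var n x - (1 - \<rho>)\<bar> / sqrt (1 - \<rho>)"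
proof -
  have "sample_var n x < 1"
    using assms by arith
  then have "1 - rho_hat n x = sample_var n x"
    by (simp add: rho_hat_def)
  moreover have "\<bar>sqrt (1 - \<rho>) - sqrt (sample_var n x)\<bar> \<le> \<bar>(1 - \<rho>) - sample_var n x\<bar> / sqrt (1 - \<rho>)"
    using assms sample_var_nonneg[OF \<open>n \<ge> 2\<close>] by (intro abs_sqrt_diff_le) auto
  ultimately show ?thesis
    by (metis abs_minus_commute)
qed

context equicorrelated_normal
begin

lemma prob_sqrt_rho_hat_deviation_le:
  assumes "0 < \<rho>" "\<rho> < 1" "a \<ge> 0" "\<epsilon> > 0"
  shows "prob {\<omega> \<in> space M. \<bar>sqrt a * (sqrt (1 - \<rho>) - sqrt (1 - rho_hat n (\<lambda>i. X i \<omega>)))\<bar> > \<epsilon>}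
     \<le> 2 * (1 - \<rho>)\<^sup>2 * (4 / \<rho>\<^sup>2 + 1 / (\<epsilon>\<^sup>2 * (1 - \<rho>))) * (a + 1) / (real n - 1)"
proof -
  define q where "q = \<epsilon> * sqrt (1 - \<rho>) / sqrt (a + 1)"
  define t where "t = min (\<rho> / 2) q"
  have "q > 0" "t > 0"
    using assms by (simp_all add: q_def t_def)
  have close: "\<bar>sqrt a * (sqrt (1 - \<rho>) - sqrt (1 - rho_hat n (\<lambda>i. X i \<omega>)))\<bar> \<le> \<epsilon>"
    if "\<bar>sample_var n (\<lambda>i. X i \<omega>) - (1 - \<rho>)\<bar> < t" for \<omega>
  proof -
    have "\<bar>sqrt (1 - \<rho>) - sqrt (1 - rho_hat n (\<lambda>i. X i \<omega>))\<bar> \<le> q / sqrt (1 - \<rho>)"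
      using abs_sqrt_one_minus_rho_hat_le[OF two_le_n, of \<rho> "\<lambda>i. X i \<omega>"] that assms
      by (force simp: t_def intro: order.trans divide_right_mono)
    then have "\<bar>sqrt a * (sqrt (1 - \<rho>) - sqrt (1 - rho_hat n (\<lambda>i. X i \<omega>)))\<bar>
        \<le> sqrt a * (\<epsilon> / sqrt (a + 1))"
      using assms by (simp add: q_def abs_mult mult_left_mono del: times_divide_eq_right)
    also have "\<dots> \<le> sqrt (a + 1) * (\<epsilon> / sqrt (a + 1))"
      using assms by (intro mult_right_mono) auto
    finally show ?thesis
      using assms by simp
  qed
  have "1 / t\<^sup>2 \<le> 1 / (\<rho> / 2)\<^sup>2 + 1 / q\<^sup>2"
    unfolding t_def using assms \<open>q > 0\<close> by (intro inverse_min_sq_le) auto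
  also have "\<dots> = 4 / \<rho>\<^sup>2 + (a + 1) / (\<epsilon>\<^sup>2 * (1 - \<rho>))"
    using assms by (simp add: q_def power_divide power_mult_distrib)
  also have "\<dots> \<le> (4 / \<rho>\<^sup>2 + 1 / (\<epsilon>\<^sup>2 * (1 - \<rho>))) * (a + 1)"
    using assms by (simp add: algebra_simps add_divide_distrib)
  finally have inverse_t_sq: "1 / t\<^sup>2 \<le> (4 / \<rho>\<^sup>2 + 1 / (\<epsilon>\<^sup>2 * (1 - \<rho>))) * (a + 1)" .
  have "prob {\<omega> \<in> space M. \<bar>sqrt a * (sqrt (1 - \<rho>) - sqrt (1 - rho_hat n (\<lambda>i. X i \<omega>)))\<bar> > \<epsilon>}
      \<le> prob {\<omega> \<in> space M. \<bar>sample_var n (\<lambda>i. X i \<omega>) - (1 - \<rho>)\<bar> \<ge> t}"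
    by (rule finite_measure_mono) (use close in \<open>auto simp: not_le[symmetric]\<close>, measurable)
  also have "\<dots> \<le> 2 * (1 - \<rho>)\<^sup>2 / (real n - 1) * (1 / t\<^sup>2)"
    using Chebyshev_inequality[OF sample_var_measurable integrable_sample_var_sq \<open>t > 0\<close>]
    by (subst (asm) variance_sample_var) (simp only: expectation_sample_var divide_inverse mult_1)
  also have "\<dots> \<le> 2 * (1 - \<rho>)\<^sup>2 / (real n - 1) * ((4 / \<rho>\<^sup>2 + 1 / (\<epsilon>\<^sup>2 * (1 - \<rho>))) * (a + 1))"
    using inverse_t_sq two_le_n by (intro mult_left_mono) auto
  finally show ?thesis
    by (simp add: field_simps)
qed

end

lemma equicorrelated_normalI:
  assumes "prob_space M" "jointly_normal M n X" "n \<ge> 2"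
    and mean: "\<And>i. i < n \<Longrightarrow> (\<integral>\<omega>. X i \<omega> \<partial>M) = 0"
    and second: "\<And>i. i < n \<Longrightarrow> (\<integral>\<omega>. (X i \<omega>)\<^sup>2 \<partial>M) = 1"
    and corr: "\<And>i j. i < n \<Longrightarrow> j < n \<Longrightarrow> i \<noteq> j \<Longrightarrow> correlation M (X i) (X j) = \<rho>"
  shows "equicorrelated_normal M n X \<rho>"
proof -
  have cov: "covariance M (X k) (X l) = (\<integral>x. X k x * X l x \<partial>M)" if "k < n" "l < n" for k l
    using that mean by (simp add: covariance_def)
  have "(\<integral>x. X k x * X l x \<partial>M) = (if k = l then 1 else \<rho>)" if "k < n" "l < n" for k l
    using that second[of k] second[of l] corr[of k l]
    by (simp add: correlation_def cov power2_eq_square)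
  with assms show ?thesis
    by (simp add: equicorrelated_normal_def equicorrelated_normal_axioms_def
        centered_jointly_normal_def centered_jointly_normal_axioms_def)
qed

lemma smallo_n_rate_tendsto_zero:
  fixes a :: "nat \<Rightarrow> real"
  assumes "a \<in> o(\<lambda>n. real n)"
  shows "(\<lambda>n. K * (a n + 1) / (real n - 1)) \<longlonglongrightarrow> 0"
proof -
  have "(\<lambda>n. a n + 1) \<in> o(\<lambda>n. real n)"
    by (rule sum_in_smallo[OF assms]) real_asymp
  then have "(\<lambda>n. K * (a n + 1)) \<in> o(\<lambda>n. real n)"
    by simp
  also have "(\<lambda>n. real n) \<in> O(\<lambda>n. real n - 1)"
    by real_asymp
  finally show ?thesis
    by (rule smalloD_tendsto)
qed

lemma tendsto_prob_sqrt_rho_hat_deviation: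
  fixes M :: "nat \<Rightarrow> 'a measure" and X :: "nat \<Rightarrow> nat \<Rightarrow> 'a \<Rightarrow> real"
  assumes "0 < \<rho>" "\<rho> < 1" and equicorrelated: "\<And>n. n \<ge> 2 \<Longrightarrow> equicorrelated_normal (M n) n (X n) \<rho>"
    and "\<And>n. a n \<ge> 0" "a \<in> o(\<lambda>n. real n)" "\<epsilon> > 0"
  shows "(\<lambda>n. measure (M n) {\<omega> \<in> space (M n).
            \<bar>sqrt (a n) * (sqrt (1 - \<rho>) - sqrt (1 - rho_hat n (\<lambda>i. X n i \<omega>)))\<bar> > \<epsilon>})
         \<longlonglongrightarrow> 0"
proof (rule tendsto_sandwich[OF _ _ tendsto_const smallo_n_rate_tendsto_zero[OF \<open>a \<in> o(_)\<close>]])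
  show "\<forall>\<^sub>F n in sequentially. 0 \<le> measure (M n) {\<omega> \<in> space (M n).
            \<bar>sqrt (a n) * (sqrt (1 - \<rho>) - sqrt (1 - rho_hat n (\<lambda>i. X n i \<omega>)))\<bar> > \<epsilon>}"
    by simp
  show "\<forall>\<^sub>F n in sequentially. measure (M n) {\<omega> \<in> space (M n).
            \<bar>sqrt (a n) * (sqrt (1 - \<rho>) - sqrt (1 - rho_hat n (\<lambda>i. X n i \<omega>)))\<bar> > \<epsilon>}
         \<le> 2 * (1 - \<rho>)\<^sup>2 * (4 / \<rho>\<^sup>2 + 1 / (\<epsilon>\<^sup>2 * (1 - \<rho>))) * (a n + 1) / (real n - 1)"
    using eventually_ge_at_top[of 2]
    by eventually_elim
      (use assms in \<open>blast intro: equicorrelated_normal.prob_sqrt_rho_hat_deviation_le[OF equicorrelated]\<close>)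
qed

theorem theorem1:
  fixes \<rho> :: real and M :: "nat \<Rightarrow> 'a measure" and X :: "nat \<Rightarrow> nat \<Rightarrow> 'a \<Rightarrow> real"
  assumes rho: "0 < \<rho>" "\<rho> < 1"
    and ps: "\<And>n. n \<ge> 2 \<Longrightarrow> prob_space (M n)"
    and gauss: "\<And>n. n \<ge> 2 \<Longrightarrow> jointly_normal (M n) n (X n)"
    and mean: "\<And>n i. n \<ge> 2 \<Longrightarrow> i < n \<Longrightarrow> (\<integral>\<omega>. X n i \<omega> \<partial>M n) = 0"
    and second: "\<And>n i. n \<ge> 2 \<Longrightarrow> i < n \<Longrightarrow> (\<integral>\<omega>. (X n i \<omega>)\<^sup>2 \<partial>M n) = 1"
    and corr: "\<And>n i j. n \<ge> 2 \<Longrightarrow> i < n \<Longrightarrow> j < n \<Longrightarrow> i \<noteq> j \<Longrightarrow>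
                 correlation (M n) (X n i) (X n j) = \<rho>"
  shows "(\<forall>a :: nat \<Rightarrow> real. (\<forall>n. a n > 0) \<longrightarrow> a \<in> o(\<lambda>n. real n) \<longrightarrow>
           (\<forall>\<epsilon>>0. (\<lambda>n. measure (M n) {\<omega> \<in> space (M n).
              \<bar>sqrt (a n) * (sqrt (1 - \<rho>) - sqrt (1 - rho_hat n (\<lambda>i. X n i \<omega>)))\<bar> > \<epsilon>})
              \<longlonglongrightarrow> 0))
       \<and> (\<forall>\<epsilon>>0. (\<lambda>n. measure (M n) {\<omega> \<in> space (M n).
              \<bar>sqrt (2 * ln (real n)) * (sqrt (1 - \<rho>) - sqrt (1 - rho_hat n (\<lambda>i. X n i \<omega>)))\<bar> > \<epsilon>})
              \<longlonglongrightarrow> 0)"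
proof -
  have equicorrelated: "equicorrelated_normal (M n) n (X n) \<rho>" if "n \<ge> 2" for n
    using that by (intro equicorrelated_normalI ps gauss mean second corr)
  note rate = tendsto_prob_sqrt_rho_hat_deviation[OF rho equicorrelated]
  have "2 * ln (real n) \<ge> 0" for n
    by (cases "n = 0") auto
  moreover have "(\<lambda>n. 2 * ln (real n)) \<in> o(\<lambda>n. real n)"
    by real_asymp
  ultimately show ?thesis
    by (intro conjI allI impI rate) (auto intro: less_imp_le)
qed

end
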